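(* Let $r\geq1$ be an integer. For $\boldsymbol\nu\in\mathbf N^r$ let $F_{\boldsymbol\nu}(\rho,\boldsymbol T)=\sum_{\boldsymbol n\in\mathbf N^r}\rho^{\min_i(n_i+\nu_i)}\prod_iT_i^{n_i}\in\mathbf Z[[\rho,T_1,\dots,T_r]]$ and $\widetilde F_{\boldsymbol\nu}(\rho,\boldsymbol T)=(1-\rho\prod_iT_i)\prod_i(1-T_i)\,F_{\boldsymbol\nu}(\rho,\boldsymbol T)$. Then: (1) Let $\boldsymbol n\in\mathbf N^r$, $m=\min_i(n_i+\nu_i)$, $I_1=\{i:n_i\geq1\}$, $I_2=\{i:n_i\geq2\}$, $K=\{i\in I_1:n_i+\nu_i\geq m+1\}$. If $I_1\neq\{1,\dots,r\}$, the coefficient of $\prod T_i^{n_i}$ in $\widetilde F_{\boldsymbol\nu}$ equals $\rho^m$ if $I_1=\varnothing$; $\rho^m-\rho^{m-1}$ if $I_1\neq\varnothing$ and $K=\varnothing$; $0$ if $K\neq\varnothing$. If $I_1=\{1,\dots,r\}$, it equals $0$ if $I_2\cap K\neq\varnothing$; $-\rho^m$ if $I_2=\varnothing$ and $K\neq\varnothing$; $0$ if $I_2\neq\varnothing$ and $K=\varnothing$; $\rho^{m-1}-\rho^m$ if $I_2\neq\varnothing$, $K\neq\varnothing$ and $I_2\cap K=\varnothing$; $-\rho^{m-1}$ if $I_2=K=\varnothing$. In particular $\widetilde F_{(0,\dots,0)}(\rho,\boldsymbol T)=1-\prod_iT_i$. (2) $\widetilde F_{\boldsymbol\nu}(\rho,\boldsymbol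 T)$ is a polynomial whose partial degree in each $T_i$ is at most $\max_j\nu_j+1$. (3) Let $\rho\geq1$, $\varepsilon>0$ and $\eta_1,\dots,\eta_r$ complex numbers of modulus $1$. Then for every $\boldsymbol\nu$, $$\big|\widetilde F_{\boldsymbol\nu}\big(\rho,(\eta_i\rho^{-1})_i\big)\big|\leq\big(2+\max_i\nu_i-\min_i\nu_i\big)^r\rho^{\min_i\nu_i}.$$ *)

theory Defs
  imports "HOL-Analysis.Analysis" "HOL-Computational_Algebra.Polynomial"
begin

definition vecs :: "nat \<Rightarrow> (nat \<Rightarrow> nat) set" where
  "vecs r = {n. \<forall>i\<ge>r. n i = 0}"

text \<open>Formal power series in T_0,...,T_(r-1) with coefficients in a ring 'a,
  given by their coefficient function on exponent vectors (only vectors in vecs r matter).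
  Coefficients will be taken in int poly (the variable of int poly is rho), so that
  Z[rho][[T]] is a subring of Z[[rho,T]].\<close>
definition mps_mult :: "nat \<Rightarrow> ((nat \<Rightarrow> nat) \<Rightarrow> 'a::comm_ring_1)
    \<Rightarrow> ((nat \<Rightarrow> nat) \<Rightarrow> 'a) \<Rightarrow> (nat \<Rightarrow> nat) \<Rightarrow> 'a" where
  "mps_mult r f g n = (\<Sum>k\<in>{k\<in>vecs r. \<forall>i. k i \<le> n i}. f k * g (\<lambda>i. n i - k i))"

definition unitvec :: "nat \<Rightarrow> nat \<Rightarrow> nat" where
  "unitvec i = (\<lambda>j. if j = i then 1 else 0)"

definition onesvec :: "nat \<Rightarrow> nat \<Rightarrow> nat" where
  "onesvec r = (\<lambda>j. if j < r then 1 else 0)"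

definition one_minus_T :: "nat \<Rightarrow> (nat \<Rightarrow> nat) \<Rightarrow> int poly" where
  "one_minus_T i n = (if n = (\<lambda>_. 0) then 1 else if n = unitvec i then -1 else 0)"

definition one_minus_rhoT :: "nat \<Rightarrow> (nat \<Rightarrow> nat) \<Rightarrow> int poly" where
  "one_minus_rhoT r n = (if n = (\<lambda>_. 0) then 1 else if n = onesvec r then - [:0, 1:] else 0)"

definition F :: "nat \<Rightarrow> (nat \<Rightarrow> nat) \<Rightarrow> (nat \<Rightarrow> nat) \<Rightarrow> int poly" where
  "F r \<nu> n = (if n \<in> vecs r then monom 1 (Min ((\<lambda>i. n i + \<nu> i) ` {..<r})) else 0)"

definition Ftilde :: "nat \<Rightarrow> (nat \<Rightarrow> nat) \<Rightarrow> (nat \<Rightarrow> nat) \<Rightarrow> int poly" where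
  "Ftilde r \<nu> = mps_mult r (one_minus_rhoT r)
      (foldr (\<lambda>i acc. mps_mult r (one_minus_T i) acc) [0..<r] (F r \<nu>))"

definition Ftilde_eval :: "nat \<Rightarrow> (nat \<Rightarrow> nat) \<Rightarrow> real \<Rightarrow> (nat \<Rightarrow> complex) \<Rightarrow> complex" where
  "Ftilde_eval r \<nu> \<rho> t =
     (\<Sum>n\<in>{n\<in>vecs r. Ftilde r \<nu> n \<noteq> 0}.
        poly (map_poly of_int (Ftilde r \<nu> n)) (complex_of_real \<rho>) * (\<Prod>i<r. t i ^ n i))"

end

theory Submission
  imports Defs
begin

text \<open>Multiplying a series by 1 - T_i replaces its coefficient at n by the coefficient at n minus
  the one at n - e_i. Starting from the coefficients rho^m, m = min_i (n_i + nu_i), of F_nu,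
  induction over the factors shows that the coefficient of prod_{i in L} (1 - T_i) F_nu is rho^m if
  n_i = 0 on L, rho^m - rho^(m-1) if every i in L with n_i >= 1 attains the minimum, and 0 otherwise.
  The factor 1 - rho T_1...T_r subtracts rho times the value at n - (1,...,1), which produces the
  case table. Hence a nonzero coefficient has modulus at most rho^m for rho >= 1, and it forces each
  n_i >= 2 to satisfy n_i + nu_i <= n_j + nu_j for some n_j <= 1, so n_i <= max nu - min nu + 1.
  The estimate at T_i = eta_i / rho follows termwise, since |T^n| = rho^(-|n|) and
  m <= min nu + |n|.\<close>

lemma vecs_bounded_subset:
  "{k \<in> vecs r. \<forall>i<r. k i \<le> b i}
     \<subseteq> (\<lambda>f i. if i < r then f i else 0) ` PiE {..<r} (\<lambda>i. {..b i})"
proof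
  fix k assume k: "k \<in> {k \<in> vecs r. \<forall>i<r. k i \<le> b i}"
  then have "k = (\<lambda>i. if i < r then restrict k {..<r} i else 0)"
    by (auto simp: vecs_def)
  moreover have "restrict k {..<r} \<in> PiE {..<r} (\<lambda>i. {..b i})"
    using k by auto
  ultimately show "k \<in> (\<lambda>f i. if i < r then f i else 0) ` PiE {..<r} (\<lambda>i. {..b i})"
    by blast
qed

lemma finite_vecs_bounded: "finite {k \<in> vecs r. \<forall>i<r. k i \<le> b i}"
  by (rule finite_subset[OF vecs_bounded_subset]) (auto intro: finite_PiE)

lemma card_vecs_bounded_le: "card {k \<in> vecs r. \<forall>i<r. k i \<le> b i} \<le> (\<Prod>i<r. b i + 1)"
proof -
  have "card {k \<in> vecs r. \<forall>i<r. k i \<le> b i}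
      \<le> card ((\<lambda>f i. if i < r then f i else 0) ` PiE {..<r} (\<lambda>i. {..b i}))"
    by (intro card_mono finite_imageI vecs_bounded_subset finite_PiE) auto
  also have "\<dots> \<le> card (PiE {..<r} (\<lambda>i. {..b i}))"
    by (intro card_image_le finite_PiE) auto
  also have "\<dots> = (\<Prod>i<r. b i + 1)"
    by (simp add: card_PiE)
  finally show ?thesis .
qed

lemma finite_mps_divisors: "finite {k \<in> vecs r. \<forall>i. k i \<le> n i}"
  by (rule finite_subset[OF _ finite_vecs_bounded[of r n]]) auto

lemma mps_mult_one_minus_T:
  assumes "i < r" "n \<in> vecs r"
  shows "mps_mult r (one_minus_T i) g n = g n - (if 1 \<le> n i then g (n(i := n i - 1)) else 0)"
proof -
  let ?S = "{k \<in> vecs r. \<forall>i. k i \<le> n i}"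
  have "(\<lambda>_. 0::nat) \<noteq> unitvec i"
    by (auto simp: unitvec_def fun_eq_iff)
  then have "\<And>k. one_minus_T i k * g (\<lambda>j. n j - k j) =
      (if k = (\<lambda>_. 0) then g n else 0) + (if k = unitvec i then - g (n(i := n i - 1)) else 0)"
    by (auto simp: one_minus_T_def unitvec_def fun_eq_iff intro!: arg_cong[where f=g])
  then have "mps_mult r (one_minus_T i) g n = (\<Sum>k\<in>?S. if k = (\<lambda>_. 0) then g n else 0) +
      (\<Sum>k\<in>?S. if k = unitvec i then - g (n(i := n i - 1)) else 0)"
    unfolding mps_mult_def by (simp add: sum.distrib)
  also have "\<dots> = g n - (if 1 \<le> n i then g (n(i := n i - 1)) else 0)"
    using assms finite_mps_divisors[of r n] by (auto simp: vecs_def unitvec_def)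
  finally show ?thesis .
qed

lemma mps_mult_one_minus_rhoT:
  assumes "1 \<le> r" "n \<in> vecs r"
  shows "mps_mult r (one_minus_rhoT r) g n =
    g n - (if \<forall>i<r. 1 \<le> n i then [:0, 1:] * g (\<lambda>j. n j - onesvec r j) else 0)"
proof -
  let ?S = "{k \<in> vecs r. \<forall>i. k i \<le> n i}"
  have "onesvec r 0 \<noteq> 0"
    using assms(1) by (simp add: onesvec_def)
  then have "(\<lambda>_. 0::nat) \<noteq> onesvec r"
    by metis
  then have "\<And>k. one_minus_rhoT r k * g (\<lambda>j. n j - k j) =
      (if k = (\<lambda>_. 0) then g n else 0) +
      (if k = onesvec r then - [:0, 1:] * g (\<lambda>j. n j - onesvec r j) else 0)"
    by (auto simp: one_minus_rhoT_def)
  then have "mps_mult r (one_minus_rhoT r) g n = (\<Sum>k\<in>?S. if k = (\<lambda>_. 0) then g n else 0) +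
      (\<Sum>k\<in>?S. if k = onesvec r then - [:0, 1:] * g (\<lambda>j. n j - onesvec r j) else 0)"
    unfolding mps_mult_def by (simp add: sum.distrib)
  also have "\<dots> = g n - (if \<forall>i<r. 1 \<le> n i then [:0, 1:] * g (\<lambda>j. n j - onesvec r j) else 0)"
    using assms finite_mps_divisors[of r n] by (auto simp: vecs_def onesvec_def)
  finally show ?thesis .
qed

definition prod_one_minus_T_F :: "nat \<Rightarrow> (nat \<Rightarrow> nat) \<Rightarrow> nat set \<Rightarrow> (nat \<Rightarrow> nat) \<Rightarrow> int poly" where
  "prod_one_minus_T_F r \<nu> L n =
    (let m = Min ((\<lambda>i. n i + \<nu> i) ` {..<r}); A = {i \<in> L. 1 \<le> n i} in
     if A = {} then monom 1 m
     else if \<forall>j\<in>A. n j + \<nu> j = m then monom 1 m - monom 1 (m - 1)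
     else 0)"

lemma Min_decrement:
  fixes \<nu> :: "nat \<Rightarrow> nat"
  assumes "i < r" "1 \<le> n i"
  defines "m \<equiv> Min ((\<lambda>j. n j + \<nu> j) ` {..<r})"
  shows "Min ((\<lambda>j. (n(i := n i - 1)) j + \<nu> j) ` {..<r}) = (if n i + \<nu> i = m then m - 1 else m)"
    (is "?m' = _")
proof -
  have mle: "m \<le> n j + \<nu> j" if "j < r" for j
    unfolding m_def using that by (intro Min_le) auto
  have "m \<in> (\<lambda>j. n j + \<nu> j) ` {..<r}"
    unfolding m_def using assms(1) by (intro Min_in) auto
  then obtain j0 where j0: "j0 < r" "m = n j0 + \<nu> j0"
    by auto
  have m'le: "?m' \<le> (n(i := n i - 1)) j + \<nu> j" if "j < r" for j
    using that by (intro Min_le) auto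
  have "m - 1 \<le> (n(i := n i - 1)) j + \<nu> j" if "j < r" for j
    using mle[OF that] by (cases "j = i") auto
  then have "m - 1 \<le> ?m'"
    using assms(1) by (subst Min_ge_iff) auto
  show ?thesis
  proof (cases "n i + \<nu> i = m")
    case True
    then show ?thesis
      using m'le[OF assms(1)] assms(2) \<open>m - 1 \<le> ?m'\<close> by simp
  next
    case False
    have "m \<le> (n(i := n i - 1)) j + \<nu> j" if "j < r" for j
      using mle[OF that] mle[OF assms(1)] assms(2) False by (cases "j = i") auto
    then have "m \<le> ?m'"
      using assms(1) by (subst Min_ge_iff) auto
    moreover have "?m' \<le> m"
      using m'le[OF j0(1)] j0 False by (cases "j0 = i") auto
    ultimately show ?thesis
      using False by simp
  qed
qed

lemma prod_one_minus_T_F_decrement: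
  fixes \<nu> n :: "nat \<Rightarrow> nat"
  assumes "i < r" "i \<notin> L" "1 \<le> n i"
  defines "m \<equiv> Min ((\<lambda>j. n j + \<nu> j) ` {..<r})"
  defines "m' \<equiv> if n i + \<nu> i = m then m - 1 else m"
  defines "A \<equiv> {j \<in> L. 1 \<le> n j}"
  shows "prod_one_minus_T_F r \<nu> L (n(i := n i - 1)) =
    (if A = {} then monom 1 m' else if \<forall>j\<in>A. n j + \<nu> j = m' then monom 1 m' - monom 1 (m' - 1) else 0)"
proof -
  have "{j \<in> L. 1 \<le> (n(i := n i - 1)) j} = A" "\<And>j. j \<in> A \<Longrightarrow> (n(i := n i - 1)) j = n j"
    using assms(2) by (auto simp: A_def)
  moreover have "Min ((\<lambda>j. (n(i := n i - 1)) j + \<nu> j) ` {..<r}) = m'"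
    unfolding m'_def m_def by (rule Min_decrement[of i r n, OF assms(1,3)])
  ultimately show ?thesis
    unfolding prod_one_minus_T_F_def Let_def by (simp cong: ball_cong)
qed

lemma prod_one_minus_T_F_insert:
  assumes "i < r" "i \<notin> L" "L \<subseteq> {..<r}"
  shows "prod_one_minus_T_F r \<nu> (insert i L) n =
    prod_one_minus_T_F r \<nu> L n - (if 1 \<le> n i then prod_one_minus_T_F r \<nu> L (n(i := n i - 1)) else 0)"
proof (cases "1 \<le> n i")
  case False
  then have "{j \<in> insert i L. 1 \<le> n j} = {j \<in> L. 1 \<le> n j}"
    by auto
  with False show ?thesis
    by (simp add: prod_one_minus_T_F_def)
next
  case True
  define m where "m = Min ((\<lambda>j. n j + \<nu> j) ` {..<r})"
  define A where "A = {j \<in> L. 1 \<le> n j}"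
  have C: "prod_one_minus_T_F r \<nu> L n =
      (if A = {} then monom 1 m else if \<forall>j\<in>A. n j + \<nu> j = m then monom 1 m - monom 1 (m - 1) else 0)"
    by (simp only: prod_one_minus_T_F_def Let_def A_def[symmetric] m_def[symmetric])
  note C' = prod_one_minus_T_F_decrement[of i r L n \<nu>, OF assms(1,2) True,
      unfolded m_def[symmetric] A_def[symmetric]]
  have "{j \<in> insert i L. 1 \<le> n j} = insert i A"
    using True by (auto simp: A_def)
  then have C_ins: "prod_one_minus_T_F r \<nu> (insert i L) n =
      (if \<forall>j\<in>insert i A. n j + \<nu> j = m then monom 1 m - monom 1 (m - 1) else 0)"
    by (simp add: prod_one_minus_T_F_def Let_def m_def)
  show ?thesis
  proof (cases "n i + \<nu> i = m")
    case min: True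
    have "m \<le> n j + \<nu> j" if "j \<in> A" for j
      unfolding m_def using that assms(3) by (intro Min_le) (auto simp: A_def)
    moreover have "1 \<le> m"
      using min True by simp
    ultimately have "\<not> (\<forall>j\<in>A. n j + \<nu> j = m - 1)" if "A \<noteq> {}"
      using that by fastforce
    then show ?thesis
      using C C' C_ins min True by auto
  next
    case False
    then show ?thesis
      using C C' C_ins True by simp
  qed
qed

lemma foldr_one_minus_T_F:
  assumes "distinct L" "set L \<subseteq> {..<r}" "n \<in> vecs r"
  shows "foldr (\<lambda>i acc. mps_mult r (one_minus_T i) acc) L (F r \<nu>) n = prod_one_minus_T_F r \<nu> (set L) n"
  using assms
proof (induction L arbitrary: n)
  case Nil
  then show ?case
    by (simp add: F_def prod_one_minus_T_F_def)
next
  case (Cons i L)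
  have "n(i := n i - 1) \<in> vecs r"
    using Cons.prems by (auto simp: vecs_def)
  with Cons show ?case
    by (simp add: mps_mult_one_minus_T prod_one_minus_T_F_insert)
qed

lemma Ftilde_eq_prod_one_minus_T_F:
  assumes "1 \<le> r" "n \<in> vecs r"
  shows "Ftilde r \<nu> n = prod_one_minus_T_F r \<nu> {..<r} n -
    (if \<forall>i<r. 1 \<le> n i then [:0, 1:] * prod_one_minus_T_F r \<nu> {..<r} (\<lambda>j. n j - onesvec r j) else 0)"
proof -
  have "(\<lambda>j. n j - onesvec r j) \<in> vecs r"
    using assms(2) by (auto simp: vecs_def)
  then show ?thesis
    using assms foldr_one_minus_T_F[of "[0..<r]" r]
    by (auto simp: Ftilde_def mps_mult_one_minus_rhoT lessThan_atLeast0)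
qed

lemma prod_one_minus_T_F_lessThan:
  fixes r :: nat and \<nu> n :: "nat \<Rightarrow> nat"
  defines "m \<equiv> Min ((\<lambda>i. n i + \<nu> i) ` {..<r})"
  defines "I1 \<equiv> {i. i < r \<and> n i \<ge> 1}"
  defines "K \<equiv> {i \<in> I1. n i + \<nu> i \<ge> m + 1}"
  shows "prod_one_minus_T_F r \<nu> {..<r} n =
    (if I1 = {} then monom 1 m else if K = {} then monom 1 m - monom 1 (m - 1) else 0)"
proof -
  have "m \<le> n j + \<nu> j" if "j < r" for j
    unfolding m_def using that by (intro Min_le) auto
  then have "K = {} \<longleftrightarrow> (\<forall>j\<in>I1. n j + \<nu> j = m)"
    by (fastforce simp: K_def I1_def)
  moreover have "{i \<in> {..<r}. 1 \<le> n i} = I1"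
    by (auto simp: I1_def)
  ultimately show ?thesis
    unfolding prod_one_minus_T_F_def Let_def m_def[symmetric] by simp
qed

lemma Ftilde_not_all_positive:
  fixes \<nu> n :: "nat \<Rightarrow> nat"
  assumes "1 \<le> r" "n \<in> vecs r"
  defines "m \<equiv> Min ((\<lambda>i. n i + \<nu> i) ` {..<r})"
  defines "I1 \<equiv> {i. i < r \<and> n i \<ge> 1}"
  defines "K \<equiv> {i \<in> I1. n i + \<nu> i \<ge> m + 1}"
  assumes "I1 \<noteq> {..<r}"
  shows "Ftilde r \<nu> n =
    (if I1 = {} then monom 1 m else if K = {} then monom 1 m - monom 1 (m - 1) else 0)"
proof -
  have "\<not> (\<forall>i<r. 1 \<le> n i)"
    using assms(6) by (auto simp: I1_def)
  then have "Ftilde r \<nu> n = prod_one_minus_T_F r \<nu> {..<r} n"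
    using Ftilde_eq_prod_one_minus_T_F[OF assms(1,2)] by auto
  also have "\<dots> = (if I1 = {} then monom 1 m else if K = {} then monom 1 m - monom 1 (m - 1) else 0)"
    unfolding m_def I1_def K_def by (rule prod_one_minus_T_F_lessThan)
  finally show ?thesis .
qed

lemma prod_one_minus_T_F_shift_ones:
  fixes \<nu> n :: "nat \<Rightarrow> nat"
  assumes "1 \<le> r" "\<forall>i<r. 1 \<le> n i"
  defines "m \<equiv> Min ((\<lambda>i. n i + \<nu> i) ` {..<r})"
  defines "I2 \<equiv> {i. i < r \<and> n i \<ge> 2}"
  defines "K \<equiv> {i. i < r \<and> n i \<ge> 1 \<and> n i + \<nu> i \<ge> m + 1}"
  shows "prod_one_minus_T_F r \<nu> {..<r} (\<lambda>j. n j - onesvec r j) =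
    (if I2 = {} then monom 1 (m - 1)
     else if I2 \<inter> K = {} then monom 1 (m - 1) - monom 1 (m - 1 - 1) else 0)"
proof -
  define n' where "n' = (\<lambda>j. n j - onesvec r j)"
  have "m \<in> (\<lambda>i. n i + \<nu> i) ` {..<r}"
    unfolding m_def using assms(1) by (intro Min_in) (auto simp: lessThan_empty_iff)
  then have m1: "1 \<le> m"
    using assms(2) by auto
  have "Min ((\<lambda>i. n' i + \<nu> i) ` {..<r}) = Min ((\<lambda>x. x - 1) ` (\<lambda>i. n i + \<nu> i) ` {..<r})"
    unfolding image_image using assms(2)
    by (intro arg_cong[where f=Min] image_cong) (auto simp: n'_def onesvec_def)
  also have "\<dots> = m - 1"
    unfolding m_def using assms(1)
    by (intro mono_Min_commute[symmetric]) (auto simp: mono_def lessThan_empty_iff)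
  finally have m': "Min ((\<lambda>i. n' i + \<nu> i) ` {..<r}) = m - 1" .
  have I1': "{i. i < r \<and> n' i \<ge> 1} = I2"
    by (auto simp: I2_def n'_def onesvec_def)
  have K': "{i \<in> I2. n' i + \<nu> i \<ge> m - 1 + 1} = I2 \<inter> K"
    using m1 by (auto simp: I2_def K_def n'_def onesvec_def)
  have "prod_one_minus_T_F r \<nu> {..<r} n' =
      (if I2 = {} then monom 1 (m - 1)
       else if I2 \<inter> K = {} then monom 1 (m - 1) - monom 1 (m - 1 - 1) else 0)"
    using prod_one_minus_T_F_lessThan[of r \<nu> n'] unfolding m' I1' K' .
  then show ?thesis
    unfolding n'_def .
qed

lemma Ftilde_all_positive:
  fixes \<nu> n :: "nat \<Rightarrow> nat"
  assumes "1 \<le> r" "n \<in> vecs r"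
  defines "m \<equiv> Min ((\<lambda>i. n i + \<nu> i) ` {..<r})"
  defines "I1 \<equiv> {i. i < r \<and> n i \<ge> 1}"
  defines "I2 \<equiv> {i. i < r \<and> n i \<ge> 2}"
  defines "K \<equiv> {i \<in> I1. n i + \<nu> i \<ge> m + 1}"
  assumes "I1 = {..<r}"
  shows "Ftilde r \<nu> n =
    (if I2 = {} then (if K = {} then - monom 1 (m - 1) else - monom 1 m)
     else if K = {} then 0
     else if I2 \<inter> K = {} then monom 1 (m - 1) - monom 1 m
     else 0)"
proof -
  have pos: "\<forall>i<r. 1 \<le> n i"
    using assms(7) by (auto simp: I1_def)
  have mle: "m \<le> n j + \<nu> j" if "j < r" for j
    unfolding m_def using that by (intro Min_le) auto
  have m1: "1 \<le> m"
    using mle pos assms(1) unfolding m_def by (subst Min_ge_iff) (auto simp: lessThan_empty_iff)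
  have m2: "2 \<le> m" if "I2 \<noteq> {}" "I2 \<inter> K = {}"
    using that mle by (fastforce simp: I2_def K_def I1_def)
  have X_monom: "[:0, 1:] * monom 1 k = monom (1::int) (Suc k)" for k
    by (simp add: monom_Suc)
  have "prod_one_minus_T_F r \<nu> {..<r} n = (if K = {} then monom 1 m - monom 1 (m - 1) else 0)"
    using prod_one_minus_T_F_lessThan[of r \<nu> n] assms(1,7)
    unfolding m_def[symmetric] I1_def[symmetric] K_def[symmetric] by (auto simp: lessThan_empty_iff)
  moreover have "prod_one_minus_T_F r \<nu> {..<r} (\<lambda>j. n j - onesvec r j) =
      (if I2 = {} then monom 1 (m - 1)
       else if I2 \<inter> K = {} then monom 1 (m - 1) - monom 1 (m - 1 - 1) else 0)"
    using prod_one_minus_T_F_shift_ones[OF assms(1) pos, of \<nu>]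
    unfolding m_def[symmetric] I2_def[symmetric] by (simp add: K_def I1_def conj_assoc)
  ultimately have "Ftilde r \<nu> n = (if K = {} then monom 1 m - monom 1 (m - 1) else 0) - [:0, 1:] *
      (if I2 = {} then monom 1 (m - 1)
       else if I2 \<inter> K = {} then monom 1 (m - 1) - monom 1 (m - 1 - 1) else 0)"
    using Ftilde_eq_prod_one_minus_T_F[OF assms(1,2)] pos by simp
  moreover have "[:0, 1:] * monom 1 (m - 1) = monom (1::int) m"
    using X_monom[of "m - 1"] m1 by simp
  moreover have "[:0, 1:] * monom 1 (m - 1 - 1) = monom (1::int) (m - 1)"
    if "I2 \<noteq> {}" "I2 \<inter> K = {}"
    using X_monom[of "m - 1 - 1"] m2[OF that] by (simp add: Suc_diff_Suc)
  ultimately show ?thesis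
    by (auto simp: ring_distribs simp del: mult_pCons_left)
qed

lemma Ftilde_coeff_cases:
  fixes \<nu> n :: "nat \<Rightarrow> nat"
  assumes "1 \<le> r" "n \<in> vecs r"
  defines "m \<equiv> Min ((\<lambda>i. n i + \<nu> i) ` {..<r})"
  defines "I1 \<equiv> {i. i < r \<and> n i \<ge> 1}"
  defines "I2 \<equiv> {i. i < r \<and> n i \<ge> 2}"
  defines "K \<equiv> {i \<in> I1. n i + \<nu> i \<ge> m + 1}"
  defines "c \<equiv> Ftilde r \<nu> n"
  shows "(I1 \<noteq> {..<r} \<longrightarrow>
             (I1 = {} \<longrightarrow> c = monom 1 m) \<and>
             (I1 \<noteq> {} \<and> K = {} \<longrightarrow> c = monom 1 m - monom 1 (m - 1)) \<and>
             (K \<noteq> {} \<longrightarrow> c = 0)) \<and>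
          (I1 = {..<r} \<longrightarrow>
             (I2 \<inter> K \<noteq> {} \<longrightarrow> c = 0) \<and>
             (I2 = {} \<and> K \<noteq> {} \<longrightarrow> c = - monom 1 m) \<and>
             (I2 \<noteq> {} \<and> K = {} \<longrightarrow> c = 0) \<and>
             (I2 \<noteq> {} \<and> K \<noteq> {} \<and> I2 \<inter> K = {} \<longrightarrow> c = monom 1 (m - 1) - monom 1 m) \<and>
             (I2 = {} \<and> K = {} \<longrightarrow> c = - monom 1 (m - 1)))"
  using Ftilde_not_all_positive[OF assms(1,2), of \<nu>] Ftilde_all_positive[OF assms(1,2), of \<nu>]
  unfolding c_def m_def[symmetric] I1_def[symmetric] I2_def[symmetric] K_def[symmetric]
  by (auto simp: K_def)

lemma vecs_eq_zero_iff: "n \<in> vecs r \<Longrightarrow> n = (\<lambda>_. 0) \<longleftrightarrow> (\<forall>i<r. n i = 0)"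
  by (auto simp: vecs_def fun_eq_iff) (metis not_less)

lemma vecs_eq_onesvec_iff: "n \<in> vecs r \<Longrightarrow> n = onesvec r \<longleftrightarrow> (\<forall>i<r. n i = 1)"
  by (auto simp: vecs_def onesvec_def fun_eq_iff)

lemma Ftilde_zero_weights_vanishing_entry:
  fixes n :: "nat \<Rightarrow> nat"
  assumes "1 \<le> r" "n \<in> vecs r" "j < r" "n j = 0"
  shows "Ftilde r (\<lambda>_. 0) n = (if n = (\<lambda>_. 0) then 1 else 0)"
proof -
  define m where "m = Min (n ` {..<r})"
  define I1 where "I1 = {i. i < r \<and> n i \<ge> 1}"
  define K where "K = {i \<in> I1. n i \<ge> m + 1}"
  note not_all = Ftilde_not_all_positive[OF assms(1,2), of "\<lambda>_. 0",
      unfolded add_0_right m_def[symmetric] I1_def[symmetric] K_def[symmetric]]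
  have "m = 0"
    using Min_le[of "n ` {..<r}" "n j"] assms(3,4) by (simp add: m_def)
  then have "K = I1"
    by (auto simp: K_def I1_def)
  have "j \<notin> I1"
    using assms(4) by (simp add: I1_def)
  then have "I1 \<noteq> {..<r}"
    using assms(3) by blast
  have "(\<forall>i<r. n i = 0) \<longleftrightarrow> I1 = {}"
    by (auto simp: I1_def)
  then have "n = (\<lambda>_. 0) \<longleftrightarrow> I1 = {}"
    using vecs_eq_zero_iff[OF assms(2)] by simp
  then show ?thesis
    using not_all[OF \<open>I1 \<noteq> {..<r}\<close>] \<open>K = I1\<close> \<open>m = 0\<close> by simp
qed

lemma Ftilde_zero_weights_positive:
  fixes n :: "nat \<Rightarrow> nat"
  assumes "1 \<le> r" "n \<in> vecs r" "\<forall>i<r. 1 \<le> n i"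
  shows "Ftilde r (\<lambda>_. 0) n = (if n = onesvec r then -1 else 0)"
proof -
  define m where "m = Min (n ` {..<r})"
  define I1 where "I1 = {i. i < r \<and> n i \<ge> 1}"
  define I2 where "I2 = {i. i < r \<and> n i \<ge> 2}"
  define K where "K = {i \<in> I1. n i \<ge> m + 1}"
  note all = Ftilde_all_positive[OF assms(1,2), of "\<lambda>_. 0",
      unfolded add_0_right m_def[symmetric] I1_def[symmetric] I2_def[symmetric] K_def[symmetric]]
  have "I1 = {..<r}"
    using assms(3) unfolding I1_def by blast
  have "1 \<le> m"
    using assms(1,3) unfolding m_def by (subst Min_ge_iff) (auto simp: lessThan_empty_iff)
  then have "K \<subseteq> I2"
    by (auto simp: K_def I1_def I2_def)
  have "n i = 1 \<longleftrightarrow> \<not> 2 \<le> n i" if "i < r" for i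
    using assms(3) that by auto
  then have all_one: "(\<forall>i<r. n i = 1) \<longleftrightarrow> I2 = {}"
    by (auto simp: I2_def)
  then have ones: "n = onesvec r \<longleftrightarrow> I2 = {}"
    using vecs_eq_onesvec_iff[OF assms(2)] by simp
  have "m \<le> n 0"
    unfolding m_def using assms(1) by (intro Min_le) auto
  then have "m = 1" if "I2 = {}"
    using all_one that assms(1) \<open>1 \<le> m\<close> by simp
  then show ?thesis
    using all[OF \<open>I1 = {..<r}\<close>] ones \<open>K \<subseteq> I2\<close> by (auto simp: Int_absorb1)
qed

lemma Ftilde_zero_weights:
  fixes n :: "nat \<Rightarrow> nat"
  assumes "1 \<le> r" "n \<in> vecs r"
  shows "Ftilde r (\<lambda>_. 0) n = (if n = (\<lambda>_. 0) then 1 else if n = onesvec r then -1 else 0)"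
proof (cases "\<forall>i<r. 1 \<le> n i")
  case True
  then have "n 0 \<noteq> 0"
    using assms(1) by auto
  then have "n \<noteq> (\<lambda>_. 0)"
    by auto
  with True show ?thesis
    by (simp add: Ftilde_zero_weights_positive[OF assms])
next
  case False
  then obtain j where "j < r" "\<not> 1 \<le> n j"
    by blast
  then have "n j = 0"
    by simp
  with \<open>j < r\<close> have "n \<noteq> onesvec r"
    by (auto simp: onesvec_def)
  with \<open>j < r\<close> \<open>n j = 0\<close> show ?thesis
    by (simp add: Ftilde_zero_weights_vanishing_entry[OF assms])
qed

lemma Ftilde_nonzero_dominated:
  fixes \<nu> n :: "nat \<Rightarrow> nat"
  assumes "1 \<le> r" "n \<in> vecs r" "Ftilde r \<nu> n \<noteq> 0" "i < r" "2 \<le> n i"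
  shows "\<exists>j<r. n j \<le> 1 \<and> n i + \<nu> i \<le> n j + \<nu> j"
proof -
  define m where "m = Min ((\<lambda>i. n i + \<nu> i) ` {..<r})"
  define I1 where "I1 = {i. i < r \<and> n i \<ge> 1}"
  define I2 where "I2 = {i. i < r \<and> n i \<ge> 2}"
  define K where "K = {i \<in> I1. n i + \<nu> i \<ge> m + 1}"
  have mle: "m \<le> n j + \<nu> j" if "j < r" for j
    unfolding m_def using that by (intro Min_le) auto
  show ?thesis
  proof (cases "I1 = {..<r}")
    case False
    then obtain j where "j < r" "n j = 0"
      by (fastforce simp: I1_def)
    have "i \<in> I1"
      using assms(4,5) by (simp add: I1_def)
    then have "K = {}"
      using Ftilde_not_all_positive[OF assms(1,2) False[unfolded I1_def], of \<nu>] assms(3)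
      unfolding m_def[symmetric] I1_def[symmetric] K_def[symmetric] by (auto split: if_splits)
    then have "n i + \<nu> i \<le> m"
      using \<open>i \<in> I1\<close> by (auto simp: K_def)
    with \<open>j < r\<close> \<open>n j = 0\<close> mle show ?thesis
      by fastforce
  next
    case True
    have "i \<in> I2"
      using assms(4,5) by (simp add: I2_def)
    then have "K \<noteq> {}" "I2 \<inter> K = {}"
      using Ftilde_all_positive[OF assms(1,2) True[unfolded I1_def], of \<nu>] assms(3)
      unfolding m_def[symmetric] I1_def[symmetric] I2_def[symmetric] K_def[symmetric]
      by (auto split: if_splits)
    then obtain k where "k \<in> K" "k \<notin> I2" "i \<notin> K"
      using \<open>i \<in> I2\<close> by auto
    then have "k < r" "n k \<le> 1" "n i + \<nu> i \<le> m"
      using \<open>i \<in> I2\<close> by (auto simp: K_def I1_def I2_def)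
    with mle show ?thesis
      by fastforce
  qed
qed

lemma Ftilde_support_bound:
  fixes \<nu> n :: "nat \<Rightarrow> nat"
  assumes "1 \<le> r" "n \<in> vecs r" "Ftilde r \<nu> n \<noteq> 0" "i < r"
  shows "n i \<le> Max (\<nu> ` {..<r}) - Min (\<nu> ` {..<r}) + 1"
proof (cases "2 \<le> n i")
  case True
  then obtain j where "j < r" "n j \<le> 1" "n i + \<nu> i \<le> n j + \<nu> j"
    using Ftilde_nonzero_dominated[OF assms] by blast
  moreover have "Min (\<nu> ` {..<r}) \<le> \<nu> i" "\<nu> j \<le> Max (\<nu> ` {..<r})"
    using assms(4) \<open>j < r\<close> by (auto intro: Min_le Max_ge)
  ultimately show ?thesis
    by linarith
qed simp

lemma finite_Ftilde_support: "finite {n \<in> vecs r. Ftilde r \<nu> n \<noteq> 0}"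
  if "1 \<le> r"
  by (rule finite_subset[OF _ finite_vecs_bounded[of r "\<lambda>_. Max (\<nu> ` {..<r}) - Min (\<nu> ` {..<r}) + 1"]])
    (use Ftilde_support_bound[OF that, of _ \<nu>] in auto)

lemma card_Ftilde_support_le:
  assumes "1 \<le> r"
  shows "card {n \<in> vecs r. Ftilde r \<nu> n \<noteq> 0} \<le> (Max (\<nu> ` {..<r}) - Min (\<nu> ` {..<r}) + 2) ^ r"
proof -
  let ?b = "Max (\<nu> ` {..<r}) - Min (\<nu> ` {..<r}) + 1"
  have "card {n \<in> vecs r. Ftilde r \<nu> n \<noteq> 0} \<le> card {n \<in> vecs r. \<forall>i<r. n i \<le> ?b}"
    using Ftilde_support_bound[OF assms, of _ \<nu>] by (intro card_mono finite_vecs_bounded) auto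
  also have "\<dots> \<le> (\<Prod>i<r. ?b + 1)"
    by (rule card_vecs_bounded_le)
  finally show ?thesis
    by simp
qed

lemma map_poly_of_int_diff:
  "map_poly (of_int :: int \<Rightarrow> 'a::ring_1) (p - q) = map_poly of_int p - map_poly of_int q"
  by (rule poly_eqI) (simp add: coeff_map_poly)

lemma map_poly_of_int_uminus:
  "map_poly (of_int :: int \<Rightarrow> 'a::ring_1) (- p) = - map_poly of_int p"
  by (rule poly_eqI) (simp add: coeff_map_poly)

lemma norm_poly_Ftilde_le:
  fixes \<nu> n :: "nat \<Rightarrow> nat" and \<rho> :: real
  assumes "1 \<le> r" "n \<in> vecs r" "1 \<le> \<rho>"
  shows "cmod (poly (map_poly of_int (Ftilde r \<nu> n)) (complex_of_real \<rho>))
    \<le> \<rho> ^ Min ((\<lambda>i. n i + \<nu> i) ` {..<r})"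
proof -
  define m where "m = Min ((\<lambda>i. n i + \<nu> i) ` {..<r})"
  have "Ftilde r \<nu> n \<in> {monom 1 m, monom 1 m - monom 1 (m - 1), 0,
      - monom 1 m, monom 1 (m - 1) - monom 1 m, - monom 1 (m - 1)}"
    using Ftilde_not_all_positive[OF assms(1,2), of \<nu>] Ftilde_all_positive[OF assms(1,2), of \<nu>]
    unfolding m_def[symmetric] by (cases "{i. i < r \<and> 1 \<le> n i} = {..<r}") auto
  moreover have "poly (map_poly of_int (monom 1 k)) (complex_of_real \<rho>) = complex_of_real (\<rho> ^ k)"
    for k
    by (simp add: map_poly_monom poly_monom)
  moreover have "0 \<le> \<rho> ^ (m - 1)" "\<rho> ^ (m - 1) \<le> \<rho> ^ m"
    using assms(3) by (auto intro: power_increasing)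
  ultimately show ?thesis
    by (auto simp: map_poly_of_int_diff map_poly_of_int_uminus m_def[symmetric]
        simp del: of_real_power of_real_diff simp flip: of_real_diff)
qed

lemma norm_Ftilde_term_le:
  fixes \<nu> n :: "nat \<Rightarrow> nat" and \<rho> :: real and \<eta> :: "nat \<Rightarrow> complex"
  assumes "1 \<le> r" "n \<in> vecs r" "1 \<le> \<rho>" "\<forall>i<r. cmod (\<eta> i) = 1"
  shows "cmod (poly (map_poly of_int (Ftilde r \<nu> n)) (complex_of_real \<rho>)
      * (\<Prod>i<r. (\<eta> i / complex_of_real \<rho>) ^ n i)) \<le> \<rho> ^ Min (\<nu> ` {..<r})"
proof -
  define \<mu> where "\<mu> = Min (\<nu> ` {..<r})"
  define s where "s = (\<Sum>i<r. n i)"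
  have "\<mu> \<in> \<nu> ` {..<r}"
    unfolding \<mu>_def using assms(1) by (intro Min_in) (auto simp: lessThan_empty_iff)
  then obtain i0 where "i0 < r" "\<nu> i0 = \<mu>"
    by auto
  then have "Min ((\<lambda>i. n i + \<nu> i) ` {..<r}) \<le> n i0 + \<mu>" "n i0 \<le> s"
    unfolding s_def by (auto intro: Min_le member_le_sum)
  then have "\<rho> ^ Min ((\<lambda>i. n i + \<nu> i) ` {..<r}) \<le> \<rho> ^ (\<mu> + s)"
    using assms(3) by (intro power_increasing) auto
  then have coeff: "cmod (poly (map_poly of_int (Ftilde r \<nu> n)) (complex_of_real \<rho>)) \<le> \<rho> ^ (\<mu> + s)"
    using norm_poly_Ftilde_le[OF assms(1-3), of \<nu>] by linarith
  have "cmod (\<Prod>i<r. (\<eta> i / complex_of_real \<rho>) ^ n i) = (\<Prod>i<r. cmod ((\<eta> i / complex_of_real \<rho>) ^ n i))"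
    by (simp add: prod_norm)
  also have "\<dots> = (\<Prod>i<r. (1 / \<rho>) ^ n i)"
    using assms(3,4) by (intro prod.cong) (auto simp: norm_power norm_divide)
  also have "\<dots> = (1 / \<rho>) ^ s"
    by (simp add: s_def power_sum)
  finally have norm_prod: "cmod (\<Prod>i<r. (\<eta> i / complex_of_real \<rho>) ^ n i) = (1 / \<rho>) ^ s" .
  have "cmod (poly (map_poly of_int (Ftilde r \<nu> n)) (complex_of_real \<rho>)
      * (\<Prod>i<r. (\<eta> i / complex_of_real \<rho>) ^ n i)) \<le> \<rho> ^ (\<mu> + s) * (1 / \<rho>) ^ s"
    unfolding norm_mult norm_prod using coeff assms(3) by (intro mult_right_mono) auto
  also have "\<dots> = \<rho> ^ \<mu>"
    using assms(3) by (simp add: power_add power_one_over field_simps)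
  finally show ?thesis
    by (simp add: \<mu>_def)
qed

lemma norm_Ftilde_eval_le:
  fixes \<nu> :: "nat \<Rightarrow> nat" and \<rho> :: real and \<eta> :: "nat \<Rightarrow> complex"
  assumes "1 \<le> r" "1 \<le> \<rho>" "\<forall>i<r. cmod (\<eta> i) = 1"
  shows "cmod (Ftilde_eval r \<nu> \<rho> (\<lambda>i. \<eta> i / complex_of_real \<rho>))
    \<le> (2 + real (Max (\<nu> ` {..<r})) - real (Min (\<nu> ` {..<r}))) ^ r * \<rho> ^ Min (\<nu> ` {..<r})"
proof -
  let ?S = "{n \<in> vecs r. Ftilde r \<nu> n \<noteq> 0}"
  let ?M = "Max (\<nu> ` {..<r})" and ?m = "Min (\<nu> ` {..<r})"
  have "?m \<le> \<nu> 0" "\<nu> 0 \<le> ?M"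
    using assms(1) by (auto intro: Min_le Max_ge)
  then have "real ((?M - ?m + 2) ^ r) = (2 + real ?M - real ?m) ^ r"
    by (simp add: of_nat_diff algebra_simps)
  moreover have "real (card ?S) \<le> real ((?M - ?m + 2) ^ r)"
    using card_Ftilde_support_le[OF assms(1), of \<nu>] by (simp only: of_nat_le_iff)
  ultimately have card: "real (card ?S) \<le> (2 + real ?M - real ?m) ^ r"
    by simp
  have "cmod (Ftilde_eval r \<nu> \<rho> (\<lambda>i. \<eta> i / complex_of_real \<rho>))
      \<le> (\<Sum>n\<in>?S. cmod (poly (map_poly of_int (Ftilde r \<nu> n)) (complex_of_real \<rho>)
           * (\<Prod>i<r. (\<eta> i / complex_of_real \<rho>) ^ n i)))"
    unfolding Ftilde_eval_def by (rule norm_sum)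
  also have "\<dots> \<le> (\<Sum>n\<in>?S. \<rho> ^ ?m)"
    by (intro sum_mono norm_Ftilde_term_le[OF assms(1) _ assms(2,3)]) auto
  also have "\<dots> = real (card ?S) * \<rho> ^ ?m"
    by simp
  also have "\<dots> \<le> (2 + real ?M - real ?m) ^ r * \<rho> ^ ?m"
    using card assms(2) by (intro mult_right_mono) auto
  finally show ?thesis .
qed

theorem proposition3p2:
  fixes r :: nat
  assumes "r \<ge> 1"
  shows
  "(\<forall>\<nu> n. n \<in> vecs r \<longrightarrow>
      (let m = Min ((\<lambda>i. n i + \<nu> i) ` {..<r});
           I1 = {i. i < r \<and> n i \<ge> 1};
           I2 = {i. i < r \<and> n i \<ge> 2};
           K = {i \<in> I1. n i + \<nu> i \<ge> m + 1};
           c = Ftilde r \<nu> n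
       in (I1 \<noteq> {..<r} \<longrightarrow>
             (I1 = {} \<longrightarrow> c = monom 1 m) \<and>
             (I1 \<noteq> {} \<and> K = {} \<longrightarrow> c = monom 1 m - monom 1 (m - 1)) \<and>
             (K \<noteq> {} \<longrightarrow> c = 0)) \<and>
          (I1 = {..<r} \<longrightarrow>
             (I2 \<inter> K \<noteq> {} \<longrightarrow> c = 0) \<and>
             (I2 = {} \<and> K \<noteq> {} \<longrightarrow> c = - monom 1 m) \<and>
             (I2 \<noteq> {} \<and> K = {} \<longrightarrow> c = 0) \<and>
             (I2 \<noteq> {} \<and> K \<noteq> {} \<and> I2 \<inter> K = {} \<longrightarrow> c = monom 1 (m - 1) - monom 1 m) \<and>
             (I2 = {} \<and> K = {} \<longrightarrow> c = - monom 1 (m - 1)))))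
   \<and> (\<forall>n\<in>vecs r. Ftilde r (\<lambda>_. 0) n =
        (if n = (\<lambda>_. 0) then 1 else if n = onesvec r then -1 else 0))
   \<and> (\<forall>\<nu>. finite {n \<in> vecs r. Ftilde r \<nu> n \<noteq> 0} \<and>
        (\<forall>n\<in>vecs r. Ftilde r \<nu> n \<noteq> 0 \<longrightarrow>
           (\<forall>i<r. n i \<le> Max (\<nu> ` {..<r}) + 1)))
   \<and> (\<forall>(\<rho>::real) (\<epsilon>::real) (\<eta>::nat \<Rightarrow> complex) \<nu>.
        \<rho> \<ge> 1 \<longrightarrow> \<epsilon> > 0 \<longrightarrow> (\<forall>i<r. cmod (\<eta> i) = 1) \<longrightarrow>
        cmod (Ftilde_eval r \<nu> \<rho> (\<lambda>i. \<eta> i / complex_of_real \<rho>))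
          \<le> (2 + real (Max (\<nu> ` {..<r})) - real (Min (\<nu> ` {..<r}))) ^ r
             * \<rho> ^ Min (\<nu> ` {..<r}))"
  apply (intro conjI allI impI ballI)
  subgoal for \<nu> n
    unfolding Let_def by (rule Ftilde_coeff_cases[OF assms])
  subgoal
    by (rule Ftilde_zero_weights[OF assms])
  subgoal
    by (rule finite_Ftilde_support[OF assms])
  subgoal for \<nu> n i
    using Ftilde_support_bound[OF assms, of n \<nu> i] by linarith
  subgoal
    by (rule norm_Ftilde_eval_le[OF assms])
  done

end
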